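(* Let $k\in\mathbb{N}_0$. (1) If $n=1$, then $\mathtt{m}_{2k}-\mathtt{m}_1^{2k}\in\operatorname{qm}(\emptyset,\emptyset)$. (2) For any $n\in\mathbb{N}$ and $i_1,\dots,i_n\in\mathbb{N}_0$, $\mathtt{m}_{2ki_1,\dots,2ki_n}-\mathtt{m}_{i_1,\dots,i_n}^{2k}\in\operatorname{qm}(\emptyset,\emptyset)$.
   Context: Let $\mathbb{R}[\underline x]=\mathbb{R}[x_1,\dots,x_n]$, $\mathscr{M}=\mathbb{R}[\mathtt{m}_{i_1,\dots,i_n}\colon (i_1,\dots,i_n)\in\mathbb{N}_0^n]$ the polynomial ring in countably many indeterminates with $\mathtt{m}_{0,\dots,0}:=1$ (for $n=1$ these are $\mathtt{m}_i$, $i\in\mathbb{N}_0$), $\mathscr{M}[\underline x]=\mathscr{M}\otimes_{\mathbb{R}}\mathbb{R}[\underline x]$, and $\mathtt{m}:\mathscr{M}[\underline x]\to\mathscr{M}$ the unique $\mathscr{M}$-linear map with $\mathtt{m}(x_1^{i_1}\cdots x_n^{i_n})=\mathtt{m}_{i_1,\dots,i_n}$. $\operatorname{qm}(\emptyset,\emptyset)$ is the quadratic module of $\mathscr{M}$ generated by $\{\mathtt{m}(f^2)\colon f\in\mathscr{M}[\underline x]\}$, i.e. the smallest subset of $\mathscr{M}$ containing $1$ and these elements and closed under addition and under multiplication by squares of elements of $\mathscr{M}$. *)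

theory Defs
  imports Complex_Main "HOL-Library.Poly_Mapping"
begin

text \<open>Multi-indices (i_1,...,i_n) in N_0^n are finitely supported maps nat =>0 nat
  whose support lies in {..<n} (coordinate j corresponds to index j+1).\<close>

definition multi_idx :: "nat \<Rightarrow> (nat \<Rightarrow>\<^sub>0 nat) set" where
  "multi_idx n = {\<alpha>. Poly_Mapping.keys \<alpha> \<subseteq> {..<n}}"

text \<open>The ring M: real polynomials in indeterminates indexed by multi-indices
  (a monomial is a finitely supported map from indices to exponents).
  Only the indeterminates m_alpha with alpha in N_0^n, alpha nonzero, belong to M
  (m_0 := 1).\<close>

type_synonym mom = "((nat \<Rightarrow>\<^sub>0 nat) \<Rightarrow>\<^sub>0 nat) \<Rightarrow>\<^sub>0 real"

text \<open>M[x] = M tensor R[x_1..x_n]: polynomials in x with coefficients in M.\<close>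

type_synonym momx = "(nat \<Rightarrow>\<^sub>0 nat) \<Rightarrow>\<^sub>0 mom"

definition mvar :: "(nat \<Rightarrow>\<^sub>0 nat) \<Rightarrow> mom" where
  "mvar \<alpha> = (if \<alpha> = 0 then 1 else Poly_Mapping.single (Poly_Mapping.single \<alpha> 1) 1)"

definition in_M :: "nat \<Rightarrow> mom \<Rightarrow> bool" where
  "in_M n p \<longleftrightarrow> (\<forall>\<mu>\<in>Poly_Mapping.keys p. Poly_Mapping.keys \<mu> \<subseteq> {\<alpha>. \<alpha> \<in> multi_idx n \<and> \<alpha> \<noteq> 0})"

definition in_Mx :: "nat \<Rightarrow> momx \<Rightarrow> bool" where
  "in_Mx n f \<longleftrightarrow> (\<forall>\<beta>\<in>Poly_Mapping.keys f. \<beta> \<in> multi_idx n \<and> in_M n (Poly_Mapping.lookup f \<beta>))"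

definition mlin :: "momx \<Rightarrow> mom" where
  "mlin f = (\<Sum>\<beta>\<in>Poly_Mapping.keys f. Poly_Mapping.lookup f \<beta> * mvar \<beta>)"

inductive_set qm0 :: "nat \<Rightarrow> mom set" for n :: nat where
  one: "1 \<in> qm0 n"
| gen: "in_Mx n f \<Longrightarrow> mlin (f * f) \<in> qm0 n"
| add: "a \<in> qm0 n \<Longrightarrow> b \<in> qm0 n \<Longrightarrow> a + b \<in> qm0 n"
| sq: "a \<in> qm0 n \<Longrightarrow> in_M n g \<Longrightarrow> g * g * a \<in> qm0 n"

end

theory Submission
  imports Defs
begin

text \<open>Put \<open>a = m\<^sub>i\<close> and \<open>x = x\<^sup>i\<close>. The gap between \<open>x\<^bsup>2k\<^esup>\<close> and its tangent line at \<open>a\<close>,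
  \<open>x\<^bsup>2k\<^esup> - 2k a\<^bsup>2k-1\<^esup> x + (2k-1) a\<^bsup>2k\<^esup>\<close>, is a sum of squares in \<open>M[x]\<close> with nonnegative integer
  weights. The functional \<open>m\<close> is \<open>M\<close>-linear with \<open>m(x) = a\<close>, so it maps this polynomial to
  \<open>m\<^bsub>2ki\<^esub> - a\<^bsup>2k\<^esup>\<close> and every weighted square \<open>c f\<^sup>2\<close> to \<open>c m(f\<^sup>2)\<close>, which lies in \<open>qm(\<emptyset>,\<emptyset>)\<close>.\<close>

lemma power_tangent_gap_eq:
  fixes u v :: "'a::comm_ring_1"
  shows "u^(m+1) - of_nat (m+1) * u * v^m + of_nat m * v^(m+1)
     = (u - v)^2 * (\<Sum>j<m. of_nat (j+1) * u^(m-1-j) * v^j)"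
proof (induction m)
  case 0
  then show ?case by simp
next
  case (Suc m)
  have "(\<Sum>j<m. of_nat (j+1) * u^(Suc m-1-j) * v^j) = u * (\<Sum>j<m. of_nat (j+1) * u^(m-1-j) * v^j)"
    unfolding sum_distrib_left
  proof (intro sum.cong refl)
    fix j assume "j \<in> {..<m}"
    then have "u^(Suc m-1-j) = u * u^(m-1-j)"
      by (simp add: Suc_diff_Suc flip: power_Suc)
    then show "of_nat (j+1) * u^(Suc m-1-j) * v^j = u * (of_nat (j+1) * u^(m-1-j) * v^j)"
      by (simp add: algebra_simps)
  qed
  then have split: "(\<Sum>j<Suc m. of_nat (j+1) * u^(Suc m-1-j) * v^j)
      = u * (\<Sum>j<m. of_nat (j+1) * u^(m-1-j) * v^j) + of_nat (m+1) * v^m"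
    by simp
  have "(u - v)^2 * (\<Sum>j<Suc m. of_nat (j+1) * u^(Suc m-1-j) * v^j)
     = u * (u^(m+1) - of_nat (m+1) * u * v^m + of_nat m * v^(m+1)) + of_nat (m+1) * v^m * (u - v)^2"
    unfolding split Suc.IH by (simp add: algebra_simps)
  also have "\<dots> = u^(Suc m+1) - of_nat (Suc m+1) * u * v^Suc m + of_nat (Suc m) * v^(Suc m+1)"
    by (simp add: algebra_simps power2_eq_square)
  finally show ?case by simp
qed

text \<open>Apply the previous lemma to \<open>u = x\<^sup>2\<close>, \<open>v = a\<^sup>2\<close> and add \<open>(m+1) a\<^bsup>2m\<^esup> (x - a)\<^sup>2\<close>.\<close>

lemma even_power_tangent_gap_sos:
  fixes x a :: "'a::comm_ring_1"
  shows "x^(2*m+2) - of_nat (2*m+2) * a^(2*m+1) * x + of_nat (2*m+1) * a^(2*m+2)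
    = (\<Sum>j<m. of_nat (j+1) * (((x^2 - a^2) * x^(m-1-j) * a^j) * ((x^2 - a^2) * x^(m-1-j) * a^j)))
      + of_nat (m+1) * ((a^m * (x - a)) * (a^m * (x - a)))"
proof -
  have "(\<Sum>j<m. of_nat (j+1) * (((x^2 - a^2) * x^(m-1-j) * a^j) * ((x^2 - a^2) * x^(m-1-j) * a^j)))
     = (x^2 - a^2)^2 * (\<Sum>j<m. of_nat (j+1) * (x^2)^(m-1-j) * (a^2)^j)"
    unfolding sum_distrib_left
    by (rule sum.cong) (simp_all add: power_mult_distrib power2_eq_square algebra_simps flip: power_mult)
  also have "\<dots> = (x^2)^(m+1) - of_nat (m+1) * x^2 * (a^2)^m + of_nat m * (a^2)^(m+1)"
    by (rule power_tangent_gap_eq[symmetric])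
  also have "\<dots> = x^(2*m+2) - of_nat (m+1) * x^2 * a^(2*m) + of_nat m * a^(2*m+2)"
    by (simp only: power_mult[symmetric]) (simp add: ac_simps)
  finally have sos: "(\<Sum>j<m. of_nat (j+1) * (((x^2 - a^2) * x^(m-1-j) * a^j) * ((x^2 - a^2) * x^(m-1-j) * a^j)))
     = x^(2*m+2) - of_nat (m+1) * x^2 * a^(2*m) + of_nat m * a^(2*m+2)" .
  have "a^m * a^m = a^(2*m)"
    by (simp add: mult_2 power_add)
  then show ?thesis
    unfolding sos by (simp add: algebra_simps power2_eq_square power_add)
qed

lemma single_power:
  fixes k :: "'k::semiring_1" and c :: "'a::comm_semiring_1"
  shows "Poly_Mapping.single k c ^ r = Poly_Mapping.single (of_nat r * k) (c ^ r)"
  by (induction r) (simp_all add: mult_single algebra_simps)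

lemma map_times_eq_of_nat_mult:
  "Poly_Mapping.map ((*) r) (i :: 'k::monoid_add \<Rightarrow>\<^sub>0 nat) = of_nat r * i"
  by (metis mult_map_scale_conv_mult single_of_nat of_nat_id)

lemma sum_single_lookup: "(\<Sum>\<beta>\<in>Poly_Mapping.keys f. Poly_Mapping.single \<beta> (Poly_Mapping.lookup f \<beta>)) = f"
  by (rule poly_mapping_eqI) (simp add: lookup_sum lookup_single when_def in_keys_iff)

lemma multi_idx_zero: "0 \<in> multi_idx n"
  by (simp add: multi_idx_def)

lemma multi_idx_add: "a \<in> multi_idx n \<Longrightarrow> b \<in> multi_idx n \<Longrightarrow> a + b \<in> multi_idx n"
  unfolding multi_idx_def using keys_add[of a b] by auto

lemma in_M_zero: "in_M n 0"
  by (simp add: in_M_def)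

lemma in_M_one: "in_M n 1"
  by (simp add: in_M_def)

lemma in_M_add: "in_M n p \<Longrightarrow> in_M n q \<Longrightarrow> in_M n (p + q)"
  unfolding in_M_def using keys_add[of p q] by blast

lemma in_M_uminus: "in_M n p \<Longrightarrow> in_M n (- p)"
  unfolding in_M_def by simp

lemma in_M_diff: "in_M n p \<Longrightarrow> in_M n q \<Longrightarrow> in_M n (p - q)"
  using in_M_add[of n p "- q"] in_M_uminus[of n q] by simp

lemma in_M_mult:
  assumes "in_M n p" "in_M n q"
  shows "in_M n (p * q)"
  unfolding in_M_def
proof
  fix \<mu> assume "\<mu> \<in> Poly_Mapping.keys (p * q)"
  then obtain a b where "\<mu> = a + b" "a \<in> Poly_Mapping.keys p" "b \<in> Poly_Mapping.keys q"
    using keys_mult[of p q] by blast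
  then show "Poly_Mapping.keys \<mu> \<subseteq> {\<alpha>. \<alpha> \<in> multi_idx n \<and> \<alpha> \<noteq> 0}"
    using assms keys_add[of a b] unfolding in_M_def by blast
qed

lemma in_M_mvar: "i \<in> multi_idx n \<Longrightarrow> in_M n (mvar i)"
  by (simp add: mvar_def in_M_one) (simp add: in_M_def)

lemma in_Mx_iff_lookup:
  "in_Mx n f \<longleftrightarrow> Poly_Mapping.keys f \<subseteq> multi_idx n \<and> (\<forall>\<beta>. in_M n (Poly_Mapping.lookup f \<beta>))"
  unfolding in_Mx_def using in_M_zero[of n] by (auto simp: in_keys_iff)

lemma in_Mx_zero: "in_Mx n 0"
  by (simp add: in_Mx_def)

lemma in_Mx_one: "in_Mx n 1"
  by (simp add: in_Mx_def multi_idx_zero in_M_one)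

lemma in_Mx_single: "\<beta> \<in> multi_idx n \<Longrightarrow> in_M n c \<Longrightarrow> in_Mx n (Poly_Mapping.single \<beta> c)"
  by (simp add: in_Mx_def)

lemma in_Mx_add: "in_Mx n f \<Longrightarrow> in_Mx n g \<Longrightarrow> in_Mx n (f + g)"
  using keys_add[of f g] unfolding in_Mx_iff_lookup by (auto simp: lookup_add in_M_add)

lemma in_Mx_diff: "in_Mx n f \<Longrightarrow> in_Mx n g \<Longrightarrow> in_Mx n (f - g)"
  using keys_diff[of f g] unfolding in_Mx_iff_lookup by (auto simp: lookup_minus in_M_diff)

lemma in_Mx_sum: "(\<And>x. x \<in> S \<Longrightarrow> in_Mx n (F x)) \<Longrightarrow> in_Mx n (sum F S)"
  by (induction S rule: infinite_finite_induct) (simp_all add: in_Mx_zero in_Mx_add)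

lemma in_Mx_mult:
  assumes f: "in_Mx n f" and g: "in_Mx n g"
  shows "in_Mx n (f * g)"
proof -
  have "f * g = (\<Sum>\<beta>\<in>Poly_Mapping.keys f. \<Sum>\<gamma>\<in>Poly_Mapping.keys g.
      Poly_Mapping.single (\<beta> + \<gamma>) (Poly_Mapping.lookup f \<beta> * Poly_Mapping.lookup g \<gamma>))"
    by (subst (1 2) sum_single_lookup[symmetric]) (simp add: sum_product mult_single)
  also have "in_Mx n \<dots>"
    using f g by (intro in_Mx_sum in_Mx_single multi_idx_add in_M_mult) (auto simp: in_Mx_def)
  finally show ?thesis .
qed

lemma in_Mx_power: "in_Mx n f \<Longrightarrow> in_Mx n (f ^ r)"
  by (induction r) (simp_all add: in_Mx_one in_Mx_mult)

lemma mvar_zero: "mvar 0 = 1"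
  by (simp add: mvar_def)

lemma mlin_eq_sum_superset:
  assumes "finite S" "Poly_Mapping.keys f \<subseteq> S"
  shows "mlin f = (\<Sum>\<beta>\<in>S. Poly_Mapping.lookup f \<beta> * mvar \<beta>)"
  unfolding mlin_def
  by (rule sum.mono_neutral_left) (use assms in \<open>auto simp: in_keys_iff\<close>)

lemma mlin_zero: "mlin 0 = 0"
  by (simp add: mlin_def)

lemma mlin_single: "mlin (Poly_Mapping.single \<beta> c) = c * mvar \<beta>"
  by (simp add: mlin_def)

lemma mlin_add: "mlin (f + g) = mlin f + mlin g"
proof -
  let ?S = "Poly_Mapping.keys f \<union> Poly_Mapping.keys g"
  have "mlin (f + g) = (\<Sum>\<beta>\<in>?S. Poly_Mapping.lookup (f + g) \<beta> * mvar \<beta>)"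
    by (rule mlin_eq_sum_superset) (auto dest: keys_add[THEN subsetD])
  also have "\<dots> = (\<Sum>\<beta>\<in>?S. Poly_Mapping.lookup f \<beta> * mvar \<beta>) + (\<Sum>\<beta>\<in>?S. Poly_Mapping.lookup g \<beta> * mvar \<beta>)"
    by (simp add: lookup_add distrib_right sum.distrib)
  also have "\<dots> = mlin f + mlin g"
    by (simp add: mlin_eq_sum_superset[symmetric])
  finally show ?thesis .
qed

lemma mlin_uminus: "mlin (- f) = - mlin f"
  unfolding mlin_def by (simp add: sum_negf)

lemma mlin_diff: "mlin (f - g) = mlin f - mlin g"
  using mlin_add[of f "- g"] by (simp add: mlin_uminus)

lemma mlin_sum: "mlin (sum F S) = (\<Sum>x\<in>S. mlin (F x))"
  by (induction S rule: infinite_finite_induct) (simp_all add: mlin_zero mlin_add)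

lemma mlin_of_nat_mult: "mlin (of_nat c * f) = of_nat c * mlin f"
  by (induction c) (simp_all add: mlin_zero mlin_add distrib_right)

lemma qm0_zero: "0 \<in> qm0 n"
  using qm0.sq[OF qm0.one in_M_zero, of n] by simp

lemma qm0_of_nat_mult: "a \<in> qm0 n \<Longrightarrow> of_nat c * a \<in> qm0 n"
  by (induction c) (simp_all add: qm0_zero distrib_right qm0.add)

lemma qm0_sum: "(\<And>x. x \<in> S \<Longrightarrow> F x \<in> qm0 n) \<Longrightarrow> sum F S \<in> qm0 n"
  by (induction S rule: infinite_finite_induct) (simp_all add: qm0_zero qm0.add)

lemma mvar_scaled_minus_power_in_qm0:
  assumes i: "i \<in> multi_idx n"
  shows "mvar (of_nat (2*m+2) * i) - mvar i ^ (2*m+2) \<in> qm0 n"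
proof -
  define a where "a = mvar i"
  define x where "x = (Poly_Mapping.single i 1 :: momx)"
  define A where "A = (Poly_Mapping.single 0 a :: momx)"
  have "in_Mx n x" "in_Mx n A"
    unfolding x_def A_def a_def using i
    by (simp_all add: in_Mx_single in_M_one in_M_mvar multi_idx_zero)
  have eval: "mlin (x^(2*m+2)) = mvar (of_nat (2*m+2) * i)"
      "mlin (A^(2*m+1) * x) = a^(2*m+2)" "mlin (A^(2*m+2)) = a^(2*m+2)"
    unfolding x_def A_def single_power
    by (simp_all add: mult_single mlin_single mvar_zero a_def[symmetric] algebra_simps)
  let ?gap = "x^(2*m+2) - of_nat (2*m+2) * A^(2*m+1) * x + of_nat (2*m+1) * A^(2*m+2)"
  have "mlin ?gap = mvar (of_nat (2*m+2) * i) - a ^ (2*m+2)"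
    by (simp only: mlin_add mlin_diff mult.assoc mlin_of_nat_mult eval) (simp add: algebra_simps)
  moreover have "mlin ?gap \<in> qm0 n"
    unfolding even_power_tangent_gap_sos mlin_add mlin_sum mlin_of_nat_mult
    using \<open>in_Mx n x\<close> \<open>in_Mx n A\<close>
    by (intro qm0.add qm0_sum qm0_of_nat_mult qm0.gen in_Mx_mult in_Mx_diff in_Mx_power)
  ultimately show ?thesis
    unfolding a_def by simp
qed

lemma mvar_map_times_minus_power_in_qm0:
  assumes "i \<in> multi_idx n"
  shows "mvar (Poly_Mapping.map (\<lambda>j. 2 * k * j) i) - mvar i ^ (2 * k) \<in> qm0 n"
proof -
  have scaled: "Poly_Mapping.map (\<lambda>j. 2 * k * j) i = of_nat (2 * k) * i"
    by (rule map_times_eq_of_nat_mult)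
  show ?thesis
  proof (cases k)
    case 0
    then show ?thesis
      unfolding scaled by (simp add: mvar_zero qm0_zero)
  next
    case (Suc m)
    then have "2 * k = 2*m+2" by simp
    then show ?thesis
      unfolding scaled using mvar_scaled_minus_power_in_qm0[OF assms, of m] by simp
  qed
qed

theorem lemma2p2:
  fixes k :: nat
  shows "mvar (Poly_Mapping.single 0 (2 * k)) - (mvar (Poly_Mapping.single 0 1)) ^ (2 * k) \<in> qm0 1
    \<and> (\<forall>n i. n \<ge> 1 \<longrightarrow> i \<in> multi_idx n \<longrightarrow>
           mvar (Poly_Mapping.map (\<lambda>j. 2 * k * j) i) - (mvar i) ^ (2 * k) \<in> qm0 n)"
proof
  have "Poly_Mapping.single 0 (1::nat) \<in> multi_idx 1"
    by (simp add: multi_idx_def)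
  then show "mvar (Poly_Mapping.single 0 (2 * k)) - (mvar (Poly_Mapping.single 0 1)) ^ (2 * k) \<in> qm0 1"
    using mvar_map_times_minus_power_in_qm0[of "Poly_Mapping.single 0 1" 1 k] by simp
  show "\<forall>n i. n \<ge> 1 \<longrightarrow> i \<in> multi_idx n \<longrightarrow>
           mvar (Poly_Mapping.map (\<lambda>j. 2 * k * j) i) - (mvar i) ^ (2 * k) \<in> qm0 n"
    using mvar_map_times_minus_power_in_qm0 by blast
qed

end
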